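(* Let $Y$ be a conformal Killing vector field of $g$, $\mathcal L_Y g_{\mu\nu}=2\omega(\mathrm{x})g_{\mu\nu}$. Let $(\mathrm{x}(\lambda),n(\lambda))$ be a solution of the Euler–Lagrange equations of $L$, fix $\lambda_0$, and set $W(\lambda)=\int_{\lambda_0}^{\lambda}n(s)\,\omega(\mathrm{x}(s))\,ds$. Then: (i) the non-local quantity $I(\lambda)=Y^\mu p_\mu+m^2W(\lambda)$ is constant along the solution; (ii) the non-local vector field $X=\left(Y^\mu-\frac{\dot{\mathrm{x}}^\mu}{n}W\right)\frac{\partial}{\partial\mathrm{x}^\mu}$, whose first prolongation $\mathrm{pr}^{(1)}X=X+\frac{dX^\mu}{d\lambda}\frac{\partial}{\partial\dot{\mathrm{x}}^\mu}$ is evaluated along the solution (using the equations of motion to eliminate accelerations), satisfies $\mathrm{pr}^{(1)}X(L)=0$, so that $X$ is a (non-local) Noether symmetry with constant surface term whose Noether charge is $I$.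
   Context: $(\mathcal M,g)$ is a pseudo-Riemannian manifold. Geodesic system: for a curve $\mathrm{x}^\mu(\lambda)$ and a positive function $n(\lambda)$ (the einbein), $L=\frac{1}{2n}g_{\mu\nu}\dot{\mathrm{x}}^\mu\dot{\mathrm{x}}^\nu-\frac{m^2}{2}n$ with $m$ a constant; its Euler–Lagrange equations are equivalent to $\ddot{\mathrm{x}}^\mu+\Gamma^\mu_{\kappa\lambda}\dot{\mathrm{x}}^\kappa\dot{\mathrm{x}}^\lambda=\dot{\mathrm{x}}^\mu\frac{d}{d\lambda}\ln n$ together with $\frac{1}{n^2}g_{\mu\nu}\dot{\mathrm{x}}^\mu\dot{\mathrm{x}}^\nu+m^2=0$. Momenta: $p_\mu=\frac1n g_{\mu\nu}\dot{\mathrm{x}}^\nu$. *)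

theory Defs
  imports "HOL-Analysis.Analysis"
begin

text \<open>We work in a single coordinate chart: points of the manifold are
coordinate vectors in real^'n, the metric is a matrix-valued function g,
and g y $ mu $ nu is the component g_{mu nu}(y).\<close>

definition partial_coord :: "(real^'n \<Rightarrow> 'b::real_normed_vector) \<Rightarrow> real^'n \<Rightarrow> 'n \<Rightarrow> 'b" where
  "partial_coord f y k = frechet_derivative f (at y) (axis k 1)"

definition gform :: "(real^'n \<Rightarrow> real^'n^'n) \<Rightarrow> real^'n \<Rightarrow> real^'n \<Rightarrow> real^'n \<Rightarrow> real" where
  "gform g y u v = (\<Sum>\<mu>\<in>UNIV. \<Sum>\<nu>\<in>UNIV. g y $ \<mu> $ \<nu> * u $ \<mu> * v $ \<nu>)"

definition Lag :: "(real^'n \<Rightarrow> real^'n^'n) \<Rightarrow> real \<Rightarrow> real^'n \<Rightarrow> real^'n \<Rightarrow> real \<Rightarrow> real" where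
  "Lag g m y v nn = gform g y v v / (2 * nn) - m\<^sup>2 * nn / 2"

definition L_x :: "(real^'n \<Rightarrow> real^'n^'n) \<Rightarrow> real \<Rightarrow> real^'n \<Rightarrow> real^'n \<Rightarrow> real \<Rightarrow> 'n \<Rightarrow> real" where
  "L_x g m y v nn \<mu> = frechet_derivative (\<lambda>z. Lag g m z v nn) (at y) (axis \<mu> 1)"

definition L_v :: "(real^'n \<Rightarrow> real^'n^'n) \<Rightarrow> real \<Rightarrow> real^'n \<Rightarrow> real^'n \<Rightarrow> real \<Rightarrow> 'n \<Rightarrow> real" where
  "L_v g m y v nn \<mu> = frechet_derivative (\<lambda>w. Lag g m y w nn) (at v) (axis \<mu> 1)"

definition L_n :: "(real^'n \<Rightarrow> real^'n^'n) \<Rightarrow> real \<Rightarrow> real^'n \<Rightarrow> real^'n \<Rightarrow> real \<Rightarrow> real" where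
  "L_n g m y v nn = deriv (\<lambda>s. Lag g m y v s) nn"

definition mom :: "(real^'n \<Rightarrow> real^'n^'n) \<Rightarrow> real^'n \<Rightarrow> real^'n \<Rightarrow> real \<Rightarrow> 'n \<Rightarrow> real" where
  "mom g y v nn \<mu> = (1 / nn) * (\<Sum>\<nu>\<in>UNIV. g y $ \<mu> $ \<nu> * v $ \<nu>)"

definition lie_metric :: "(real^'n \<Rightarrow> real^'n^'n) \<Rightarrow> (real^'n \<Rightarrow> real^'n) \<Rightarrow> real^'n \<Rightarrow> 'n \<Rightarrow> 'n \<Rightarrow> real" where
  "lie_metric g Y y \<mu> \<nu> =
     (\<Sum>\<kappa>\<in>UNIV. Y y $ \<kappa> * partial_coord g y \<kappa> $ \<mu> $ \<nu>)
   + (\<Sum>\<kappa>\<in>UNIV. g y $ \<kappa> $ \<nu> * partial_coord Y y \<mu> $ \<kappa>)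
   + (\<Sum>\<kappa>\<in>UNIV. g y $ \<mu> $ \<kappa> * partial_coord Y y \<nu> $ \<kappa>)"

definition oint :: "real \<Rightarrow> real \<Rightarrow> (real \<Rightarrow> real) \<Rightarrow> real" where
  "oint t0 t f = (if t0 \<le> t then integral {t0..t} f else - integral {t..t0} f)"

end

theory Submission
  imports Defs
begin

text \<open>Along a solution, the Euler--Lagrange equation for \<open>x\<close> gives
  \<open>(Y\<^sup>\<mu> p\<^sub>\<mu>)' = (L\<^sub>Y g)(x', x') / (2n) = \<omega> g(x', x') / n\<close>, and the equation for \<open>n\<close> is the
  mass-shell condition \<open>g(x', x') = -m\<^sup>2 n\<^sup>2\<close>. Hence \<open>(Y\<^sup>\<mu> p\<^sub>\<mu>)' = -m\<^sup>2 n \<omega> = -m\<^sup>2 W'\<close> and \<open>I\<close> is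
  constant. Moreover \<open>x'\<^sup>\<mu> p\<^sub>\<mu> = g(x', x') / n = -m\<^sup>2 n\<close>, so \<open>X\<^sup>\<mu> \<partial>L/\<partial>x'\<^sup>\<mu> = I\<close>; differentiating
  this identity and using the Euler--Lagrange equation for \<open>x\<close> once more gives
  \<open>X\<^sup>\<mu> \<partial>L/\<partial>x\<^sup>\<mu> + (X\<^sup>\<mu>)' \<partial>L/\<partial>x'\<^sup>\<mu> = I' = 0\<close>.\<close>

lemma has_derivative_vec_nth [derivative_intros]:
  "(f has_derivative f') F \<Longrightarrow> ((\<lambda>x. f x $ i) has_derivative (\<lambda>h. f' h $ i)) F"
  by (rule bounded_linear.has_derivative[OF bounded_linear_vec_nth])

lemma sum_axis_mult: "(\<Sum>k\<in>UNIV. axis \<mu> (1::'a::comm_semiring_1) $ k * f k) = f \<mu>"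
  by (simp add: axis_def mult_if_delta)

lemma sum_rotate3:
  "(\<Sum>k\<in>A. \<Sum>j\<in>B. \<Sum>i\<in>C. F i k j) = (\<Sum>i\<in>C. \<Sum>k\<in>A. \<Sum>j\<in>B. F i k j)"
proof -
  have "(\<Sum>k\<in>A. \<Sum>j\<in>B. \<Sum>i\<in>C. F i k j) = (\<Sum>k\<in>A. \<Sum>i\<in>C. \<Sum>j\<in>B. F i k j)"
    by (rule sum.cong[OF refl], rule sum.swap)
  also have "\<dots> = (\<Sum>i\<in>C. \<Sum>k\<in>A. \<Sum>j\<in>B. F i k j)"
    by (rule sum.swap)
  finally show ?thesis .
qed

lemma has_real_derivative_component_comp:
  fixes Y :: "real^'n \<Rightarrow> real^'m"
  assumes x: "(x has_vector_derivative v) (at t)" and Y: "Y differentiable (at (x t))"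
  shows "((\<lambda>s. Y (x s) $ \<mu>) has_real_derivative (\<Sum>\<kappa>\<in>UNIV. v $ \<kappa> * partial_coord Y (x t) \<kappa> $ \<mu>)) (at t)"
proof -
  let ?D = "frechet_derivative Y (at (x t))"
  have DY: "(Y has_derivative ?D) (at (x t))"
    using Y frechet_derivative_works by blast
  have lin: "linear ?D"
    using has_derivative_linear[OF DY] .
  have "(x has_derivative (\<lambda>h. h *\<^sub>R v)) (at t)"
    using x by (simp add: has_vector_derivative_def)
  from diff_chain_at[OF this DY]
  have "((\<lambda>s. Y (x s) $ \<mu>) has_derivative (\<lambda>h. ?D (h *\<^sub>R v) $ \<mu>)) (at t)"
    by (auto dest: has_derivative_vec_nth simp: o_def)
  moreover have "(\<lambda>h. ?D (h *\<^sub>R v) $ \<mu>) = (*) (?D v $ \<mu>)"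
    using lin by (simp add: linear_scale fun_eq_iff mult.commute)
  moreover have "?D v $ \<mu> = (\<Sum>\<kappa>\<in>UNIV. v $ \<kappa> * partial_coord Y (x t) \<kappa> $ \<mu>)"
    unfolding partial_coord_def
    by (rule Cartesian_Space.linear_componentwise[OF linear_matrix_vector_mul_eq[THEN iffD2, OF lin]])
  ultimately show ?thesis
    by (simp add: has_field_derivative_def)
qed

lemma has_real_derivative_oint:
  fixes f :: "real \<Rightarrow> real"
  assumes cont: "continuous_on {a<..<b} f" and t0: "t0 \<in> {a<..<b}" and t: "t \<in> {a<..<b}"
  shows "((\<lambda>u. oint t0 u f) has_real_derivative f t) (at t)"
proof -
  define c where "c = (a + min t t0) / 2"
  define d where "d = (b + max t t0) / 2"
  have cd: "a < c" "c < min t t0" "max t t0 < d" "d < b"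
    using t0 t by (auto simp: c_def d_def)
  have cont_cd: "continuous_on {c..d} f"
    by (rule continuous_on_subset[OF cont]) (use cd in auto)
  have integrable: "f integrable_on {p..q}" if "c \<le> p" "q \<le> d" for p q
    by (rule integrable_continuous_real, rule continuous_on_subset[OF cont_cd]) (use that in auto)
  have oint_eq: "oint t0 u f = integral {c..u} f - integral {c..t0} f" if u: "u \<in> {c<..<d}" for u
  proof (cases "t0 \<le> u")
    case True
    have "integral {c..t0} f + integral {t0..u} f = integral {c..u} f"
      by (rule Henstock_Kurzweil_Integration.integral_combine) (use True cd u in \<open>auto intro!: integrable\<close>)
    then show ?thesis using True by (simp add: oint_def)
  next
    case False
    have "integral {c..u} f + integral {u..t0} f = integral {c..t0} f"
      by (rule Henstock_Kurzweil_Integration.integral_combine) (use False cd u in \<open>auto intro!: integrable\<close>)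
    then show ?thesis using False by (simp add: oint_def)
  qed
  have "((\<lambda>u. integral {c..u} f) has_vector_derivative f t) (at t within {c..d})"
    by (rule integral_has_vector_derivative[OF cont_cd]) (use cd in auto)
  moreover have "at t within {c..d} = at t"
    by (rule at_within_Icc_at) (use cd in auto)
  ultimately have "((\<lambda>u. integral {c..u} f - integral {c..t0} f) has_real_derivative f t) (at t)"
    by (auto intro: derivative_eq_intros simp: has_real_derivative_iff_has_vector_derivative)
  then show ?thesis
    by (rule has_field_derivative_transform_within_open[where S="{c<..<d}"]) (use cd oint_eq in auto)
qed

lemma L_x_eq:
  assumes "g differentiable (at y)" and "nn \<noteq> 0"
  shows "L_x g m y v nn \<mu> =
    (\<Sum>\<kappa>\<in>UNIV. \<Sum>\<nu>\<in>UNIV. partial_coord g y \<mu> $ \<kappa> $ \<nu> * v $ \<kappa> * v $ \<nu>) / (2 * nn)"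
proof -
  let ?D = "frechet_derivative g (at y)"
  have D: "(g has_derivative ?D) (at y)"
    using assms frechet_derivative_works by blast
  have "((\<lambda>z. Lag g m z v nn) has_derivative
      (\<lambda>h. (\<Sum>\<kappa>\<in>UNIV. \<Sum>\<nu>\<in>UNIV. ?D h $ \<kappa> $ \<nu> * v $ \<kappa> * v $ \<nu>) / (2 * nn))) (at y)"
    unfolding Lag_def gform_def
    by (rule derivative_eq_intros D refl | simp add: assms)+
  then show ?thesis
    unfolding L_x_def partial_coord_def by (simp add: frechet_derivative_at[symmetric])
qed

lemma L_v_eq_mom:
  assumes sym: "\<And>\<mu> \<nu>. g y $ \<mu> $ \<nu> = g y $ \<nu> $ \<mu>" and "nn \<noteq> 0"
  shows "L_v g m y v nn \<mu> = mom g y v nn \<mu>"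
proof -
  let ?e = "axis \<mu> (1::real)"
  have "((\<lambda>w. Lag g m y w nn) has_derivative (\<lambda>h. (\<Sum>\<kappa>\<in>UNIV. \<Sum>\<nu>\<in>UNIV.
      g y $ \<kappa> $ \<nu> * (h $ \<kappa> * v $ \<nu> + v $ \<kappa> * h $ \<nu>)) / (2 * nn))) (at v)"
    unfolding Lag_def gform_def
    by (rule derivative_eq_intros refl | simp add: assms algebra_simps sum.distrib)+
  then have "L_v g m y v nn \<mu> =
      (\<Sum>\<kappa>\<in>UNIV. \<Sum>\<nu>\<in>UNIV. g y $ \<kappa> $ \<nu> * (?e $ \<kappa> * v $ \<nu> + v $ \<kappa> * ?e $ \<nu>)) / (2 * nn)"
    unfolding L_v_def by (simp add: frechet_derivative_at[symmetric])
  also have "\<dots> = ((\<Sum>\<kappa>\<in>UNIV. ?e $ \<kappa> * (\<Sum>\<nu>\<in>UNIV. g y $ \<kappa> $ \<nu> * v $ \<nu>))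
      + (\<Sum>\<kappa>\<in>UNIV. \<Sum>\<nu>\<in>UNIV. ?e $ \<nu> * (g y $ \<kappa> $ \<nu> * v $ \<kappa>))) / (2 * nn)"
    by (simp add: distrib_left sum.distrib sum_distrib_left mult_ac)
  also have "\<dots> = ((\<Sum>\<kappa>\<in>UNIV. ?e $ \<kappa> * (\<Sum>\<nu>\<in>UNIV. g y $ \<kappa> $ \<nu> * v $ \<nu>))
      + (\<Sum>\<nu>\<in>UNIV. ?e $ \<nu> * (\<Sum>\<kappa>\<in>UNIV. g y $ \<kappa> $ \<nu> * v $ \<kappa>))) / (2 * nn)"
    by (subst sum.swap) (simp add: sum_distrib_left)
  also have "\<dots> = ((\<Sum>\<nu>\<in>UNIV. g y $ \<mu> $ \<nu> * v $ \<nu>) + (\<Sum>\<kappa>\<in>UNIV. g y $ \<kappa> $ \<mu> * v $ \<kappa>)) / (2 * nn)"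
    by (simp only: sum_axis_mult)
  also have "\<dots> = mom g y v nn \<mu>"
    unfolding mom_def using assms by (simp add: field_simps)
  finally show ?thesis .
qed

lemma L_n_eq:
  assumes "nn \<noteq> 0"
  shows "L_n g m y v nn = - gform g y v v / (2 * nn\<^sup>2) - m\<^sup>2 / 2"
  unfolding L_n_def Lag_def
proof (rule DERIV_imp_deriv)
  show "((\<lambda>s. gform g y v v / (2 * s) - m\<^sup>2 * s / 2) has_real_derivative
      - gform g y v v / (2 * nn\<^sup>2) - m\<^sup>2 / 2) (at nn)"
    by (rule derivative_eq_intros refl | simp add: assms)+ (simp add: assms power2_eq_square field_simps)
qed

lemma sum_mult_mom_eq_gform:
  "(\<Sum>\<mu>\<in>UNIV. v $ \<mu> * mom g y v nn \<mu>) = gform g y v v / nn"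
  unfolding mom_def gform_def by (simp add: sum_distrib_left sum_divide_distrib mult_ac)

lemma lie_metric_quadratic_form:
  assumes sym: "\<And>\<mu> \<nu>. g y $ \<mu> $ \<nu> = g y $ \<nu> $ \<mu>"
  shows "(\<Sum>\<mu>\<in>UNIV. \<Sum>\<nu>\<in>UNIV. lie_metric g Y y \<mu> \<nu> * v $ \<mu> * v $ \<nu>) =
    (\<Sum>\<mu>\<in>UNIV. Y y $ \<mu> * (\<Sum>\<kappa>\<in>UNIV. \<Sum>\<nu>\<in>UNIV. partial_coord g y \<mu> $ \<kappa> $ \<nu> * v $ \<kappa> * v $ \<nu>))
    + 2 * (\<Sum>\<mu>\<in>UNIV. (\<Sum>\<kappa>\<in>UNIV. v $ \<kappa> * partial_coord Y y \<kappa> $ \<mu>) * (\<Sum>\<nu>\<in>UNIV. g y $ \<mu> $ \<nu> * v $ \<nu>))"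
proof -
  define S where "S h = (\<Sum>\<mu>\<in>UNIV. \<Sum>\<nu>\<in>UNIV. h \<mu> \<nu> * v $ \<mu> * v $ \<nu>)" for h :: "'a \<Rightarrow> 'a \<Rightarrow> real"
  have S_add: "S (\<lambda>\<mu> \<nu>. h1 \<mu> \<nu> + h2 \<mu> \<nu>) = S h1 + S h2" for h1 h2
    by (simp add: S_def algebra_simps sum.distrib)
  have Y_dg_term: "S (\<lambda>\<mu> \<nu>. \<Sum>\<kappa>\<in>UNIV. Y y $ \<kappa> * partial_coord g y \<kappa> $ \<mu> $ \<nu>) =
      (\<Sum>\<mu>\<in>UNIV. Y y $ \<mu> * (\<Sum>\<kappa>\<in>UNIV. \<Sum>\<nu>\<in>UNIV. partial_coord g y \<mu> $ \<kappa> $ \<nu> * v $ \<kappa> * v $ \<nu>))"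
  proof -
    have "S (\<lambda>\<mu> \<nu>. \<Sum>\<kappa>\<in>UNIV. Y y $ \<kappa> * partial_coord g y \<kappa> $ \<mu> $ \<nu>) =
        (\<Sum>\<mu>\<in>UNIV. \<Sum>\<nu>\<in>UNIV. \<Sum>\<kappa>\<in>UNIV. Y y $ \<kappa> * partial_coord g y \<kappa> $ \<mu> $ \<nu> * v $ \<mu> * v $ \<nu>)"
      by (simp add: S_def sum_distrib_right)
    also have "\<dots> = (\<Sum>\<kappa>\<in>UNIV. \<Sum>\<mu>\<in>UNIV. \<Sum>\<nu>\<in>UNIV. Y y $ \<kappa> * partial_coord g y \<kappa> $ \<mu> $ \<nu> * v $ \<mu> * v $ \<nu>)"
      by (rule sum_rotate3)
    finally show ?thesis
      by (simp add: sum_distrib_left mult_ac)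
  qed
  have dY_term: "S (\<lambda>\<mu> \<nu>. \<Sum>\<kappa>\<in>UNIV. g y $ \<kappa> $ \<nu> * partial_coord Y y \<mu> $ \<kappa>) =
      (\<Sum>\<mu>\<in>UNIV. (\<Sum>\<kappa>\<in>UNIV. v $ \<kappa> * partial_coord Y y \<kappa> $ \<mu>) * (\<Sum>\<nu>\<in>UNIV. g y $ \<mu> $ \<nu> * v $ \<nu>))"
  proof -
    have "S (\<lambda>\<mu> \<nu>. \<Sum>\<kappa>\<in>UNIV. g y $ \<kappa> $ \<nu> * partial_coord Y y \<mu> $ \<kappa>) =
        (\<Sum>\<mu>\<in>UNIV. \<Sum>\<nu>\<in>UNIV. \<Sum>\<kappa>\<in>UNIV. g y $ \<kappa> $ \<nu> * partial_coord Y y \<mu> $ \<kappa> * v $ \<mu> * v $ \<nu>)"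
      by (simp add: S_def sum_distrib_right)
    also have "\<dots> = (\<Sum>\<kappa>\<in>UNIV. \<Sum>\<mu>\<in>UNIV. \<Sum>\<nu>\<in>UNIV. g y $ \<kappa> $ \<nu> * partial_coord Y y \<mu> $ \<kappa> * v $ \<mu> * v $ \<nu>)"
      by (rule sum_rotate3)
    finally show ?thesis
      by (simp add: sum_product mult_ac)
  qed
  txt \<open>By symmetry of \<open>g\<close> the last two terms of the Lie derivative contribute equally.\<close>
  have "S (\<lambda>\<mu> \<nu>. \<Sum>\<kappa>\<in>UNIV. g y $ \<mu> $ \<kappa> * partial_coord Y y \<nu> $ \<kappa>) =
      S (\<lambda>\<mu> \<nu>. \<Sum>\<kappa>\<in>UNIV. g y $ \<kappa> $ \<nu> * partial_coord Y y \<mu> $ \<kappa>)"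
    unfolding S_def by (rule trans[OF sum.swap]) (simp add: sym mult_ac)
  moreover have "(\<Sum>\<mu>\<in>UNIV. \<Sum>\<nu>\<in>UNIV. lie_metric g Y y \<mu> \<nu> * v $ \<mu> * v $ \<nu>) =
      S (\<lambda>\<mu> \<nu>. \<Sum>\<kappa>\<in>UNIV. Y y $ \<kappa> * partial_coord g y \<kappa> $ \<mu> $ \<nu>)
      + S (\<lambda>\<mu> \<nu>. \<Sum>\<kappa>\<in>UNIV. g y $ \<kappa> $ \<nu> * partial_coord Y y \<mu> $ \<kappa>)
      + S (\<lambda>\<mu> \<nu>. \<Sum>\<kappa>\<in>UNIV. g y $ \<mu> $ \<kappa> * partial_coord Y y \<nu> $ \<kappa>)"
    unfolding lie_metric_def by (simp only: S_add flip: S_def)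
  ultimately show ?thesis
    using Y_dg_term dY_term by simp
qed

locale conformal_Killing_solution =
  fixes g :: "real^'n \<Rightarrow> real^'n^'n" and Y :: "real^'n \<Rightarrow> real^'n"
    and \<omega> :: "real^'n \<Rightarrow> real" and U :: "(real^'n) set"
    and m a b t0 :: real and x xd :: "real \<Rightarrow> real^'n" and n :: "real \<Rightarrow> real"
  assumes g_sym: "\<forall>y\<in>U. \<forall>\<mu> \<nu>. g y $ \<mu> $ \<nu> = g y $ \<nu> $ \<mu>"
    and g_diff: "\<forall>y\<in>U. g differentiable (at y)"
    and Y_diff: "\<forall>y\<in>U. Y differentiable (at y)"
    and \<omega>_cont: "continuous_on U \<omega>"
    and conf_Killing: "\<forall>y\<in>U. \<forall>\<mu> \<nu>. lie_metric g Y y \<mu> \<nu> = 2 * \<omega> y * g y $ \<mu> $ \<nu>"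
    and t0_in: "t0 \<in> {a<..<b}"
    and x_in: "\<forall>t\<in>{a<..<b}. x t \<in> U"
    and x_deriv: "\<forall>t\<in>{a<..<b}. (x has_vector_derivative xd t) (at t)"
    and xd_diff: "\<forall>t\<in>{a<..<b}. xd differentiable (at t)"
    and n_pos: "\<forall>t\<in>{a<..<b}. n t > 0"
    and n_diff: "\<forall>t\<in>{a<..<b}. n differentiable (at t)"
    and EL_x: "\<forall>t\<in>{a<..<b}. \<forall>\<mu>.
                 ((\<lambda>s. L_v g m (x s) (xd s) (n s) \<mu>) has_real_derivative
                    L_x g m (x t) (xd t) (n t) \<mu>) (at t)"
    and EL_n: "\<forall>t\<in>{a<..<b}. L_n g m (x t) (xd t) (n t) = 0"
begin

definition W :: "real \<Rightarrow> real" where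
  "W t = oint t0 t (\<lambda>s. n s * \<omega> (x s))"

definition charge :: "real \<Rightarrow> real" where
  "charge t = (\<Sum>\<mu>\<in>UNIV. Y (x t) $ \<mu> * mom g (x t) (xd t) (n t) \<mu>) + m\<^sup>2 * W t"

definition noether_field :: "'n \<Rightarrow> real \<Rightarrow> real" where
  "noether_field \<mu> t = Y (x t) $ \<mu> - xd t $ \<mu> / n t * W t"

lemma n_nonzero:
  assumes t: "t \<in> {a<..<b}"
  shows "n t \<noteq> 0"
  using n_pos t by force

lemma L_v_eq_mom_along:
  assumes t: "t \<in> {a<..<b}"
  shows "L_v g m (x t) (xd t) (n t) \<mu> = mom g (x t) (xd t) (n t) \<mu>"
  using g_sym x_in t n_nonzero[OF t] by (intro L_v_eq_mom) auto

lemma mass_shell: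
  assumes t: "t \<in> {a<..<b}"
  shows "gform g (x t) (xd t) (xd t) = - m\<^sup>2 * (n t)\<^sup>2"
proof -
  have "- gform g (x t) (xd t) (xd t) / (2 * (n t)\<^sup>2) - m\<^sup>2 / 2 = 0"
    using EL_n t L_n_eq[OF n_nonzero[OF t]] by metis
  then show ?thesis
    using n_nonzero[OF t] by (simp add: field_simps)
qed

lemma has_real_derivative_W:
  assumes t: "t \<in> {a<..<b}"
  shows "(W has_real_derivative n t * \<omega> (x t)) (at t)"
proof -
  have "continuous_on {a<..<b} x"
    using x_deriv has_vector_derivative_continuous continuous_at_imp_continuous_on by blast
  then have "continuous_on {a<..<b} (\<lambda>s. \<omega> (x s))"
    using \<omega>_cont x_in by (auto intro: continuous_on_compose2)
  moreover have "continuous_on {a<..<b} n"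
    using n_diff differentiable_imp_continuous_within continuous_at_imp_continuous_on by blast
  ultimately have "continuous_on {a<..<b} (\<lambda>s. n s * \<omega> (x s))"
    by (intro continuous_on_mult)
  then show ?thesis
    unfolding W_def[abs_def] using has_real_derivative_oint t0_in t by blast
qed

lemma has_real_derivative_Y_comp:
  assumes t: "t \<in> {a<..<b}"
  shows "((\<lambda>s. Y (x s) $ \<mu>) has_real_derivative (\<Sum>\<kappa>\<in>UNIV. xd t $ \<kappa> * partial_coord Y (x t) \<kappa> $ \<mu>)) (at t)"
  using x_deriv Y_diff x_in t by (intro has_real_derivative_component_comp) auto

lemma has_real_derivative_Y_mom:
  assumes t: "t \<in> {a<..<b}"
  shows "((\<lambda>s. \<Sum>\<mu>\<in>UNIV. Y (x s) $ \<mu> * L_v g m (x s) (xd s) (n s) \<mu>) has_real_derivative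
     \<omega> (x t) * gform g (x t) (xd t) (xd t) / n t) (at t)"
proof -
  let ?v = "xd t" and ?y = "x t"
  let ?DYv = "\<lambda>\<mu>. \<Sum>\<kappa>\<in>UNIV. ?v $ \<kappa> * partial_coord Y ?y \<kappa> $ \<mu>"
  have deriv: "((\<lambda>s. \<Sum>\<mu>\<in>UNIV. Y (x s) $ \<mu> * L_v g m (x s) (xd s) (n s) \<mu>) has_real_derivative
      (\<Sum>\<mu>\<in>UNIV. ?DYv \<mu> * L_v g m ?y ?v (n t) \<mu> + L_x g m ?y ?v (n t) \<mu> * Y ?y $ \<mu>)) (at t)"
    using EL_x t by (intro DERIV_sum DERIV_mult has_real_derivative_Y_comp[OF t]) auto
  have "(\<Sum>\<mu>\<in>UNIV. ?DYv \<mu> * L_v g m ?y ?v (n t) \<mu> + L_x g m ?y ?v (n t) \<mu> * Y ?y $ \<mu>)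
      = ((\<Sum>\<mu>\<in>UNIV. Y ?y $ \<mu> * (\<Sum>\<kappa>\<in>UNIV. \<Sum>\<nu>\<in>UNIV. partial_coord g ?y \<mu> $ \<kappa> $ \<nu> * ?v $ \<kappa> * ?v $ \<nu>))
        + 2 * (\<Sum>\<mu>\<in>UNIV. ?DYv \<mu> * (\<Sum>\<nu>\<in>UNIV. g ?y $ \<mu> $ \<nu> * ?v $ \<nu>))) / (2 * n t)"
    using g_diff x_in t n_nonzero[OF t]
    by (simp add: L_v_eq_mom_along[OF t] L_x_eq mom_def sum.distrib sum_divide_distrib
        add_divide_distrib sum_distrib_left mult_ac)
  also have "\<dots> = (\<Sum>\<mu>\<in>UNIV. \<Sum>\<nu>\<in>UNIV. lie_metric g Y ?y \<mu> \<nu> * ?v $ \<mu> * ?v $ \<nu>) / (2 * n t)"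
    using g_sym x_in t by (subst lie_metric_quadratic_form) auto
  also have "\<dots> = 2 * \<omega> ?y * gform g ?y ?v ?v / (2 * n t)"
    using conf_Killing x_in t by (simp add: gform_def sum_distrib_left mult_ac)
  finally show ?thesis
    using deriv by simp
qed

lemma charge_eq_L_v:
  assumes t: "t \<in> {a<..<b}"
  shows "charge t = (\<Sum>\<mu>\<in>UNIV. Y (x t) $ \<mu> * L_v g m (x t) (xd t) (n t) \<mu>) + m\<^sup>2 * W t"
  by (simp add: charge_def L_v_eq_mom_along[OF t])

lemma has_real_derivative_charge:
  assumes t: "t \<in> {a<..<b}"
  shows "(charge has_real_derivative 0) (at t)"
proof -
  have "((\<lambda>s. (\<Sum>\<mu>\<in>UNIV. Y (x s) $ \<mu> * L_v g m (x s) (xd s) (n s) \<mu>) + m\<^sup>2 * W s) has_real_derivative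
      \<omega> (x t) * gform g (x t) (xd t) (xd t) / n t + m\<^sup>2 * (n t * \<omega> (x t))) (at t)"
    by (intro DERIV_add DERIV_cmult has_real_derivative_Y_mom[OF t] has_real_derivative_W[OF t])
  also have "\<omega> (x t) * gform g (x t) (xd t) (xd t) / n t + m\<^sup>2 * (n t * \<omega> (x t)) = 0"
    using n_nonzero[OF t] by (simp add: mass_shell[OF t] power2_eq_square)
  finally show ?thesis
    by (rule has_field_derivative_transform_within_open[where S="{a<..<b}"]) (use t charge_eq_L_v in auto)
qed

lemma charge_constant:
  assumes "t \<in> {a<..<b}" and "s \<in> {a<..<b}"
  shows "charge t = charge s"
proof -
  have "\<exists>c. \<forall>t\<in>{a<..<b}. charge t = c"
    by (rule has_field_derivative_zero_constant)
      (blast intro: has_field_derivative_at_within has_real_derivative_charge)+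
  then show ?thesis
    using assms by auto
qed

lemma sum_noether_field_L_v:
  assumes t: "t \<in> {a<..<b}"
  shows "(\<Sum>\<mu>\<in>UNIV. noether_field \<mu> t * L_v g m (x t) (xd t) (n t) \<mu>) = charge t"
proof -
  have "(\<Sum>\<mu>\<in>UNIV. noether_field \<mu> t * L_v g m (x t) (xd t) (n t) \<mu>)
      = (\<Sum>\<mu>\<in>UNIV. Y (x t) $ \<mu> * mom g (x t) (xd t) (n t) \<mu>)
        - W t / n t * (\<Sum>\<mu>\<in>UNIV. xd t $ \<mu> * mom g (x t) (xd t) (n t) \<mu>)"
    by (simp add: noether_field_def L_v_eq_mom_along[OF t] algebra_simps sum_subtractf sum_distrib_left)
  also have "(\<Sum>\<mu>\<in>UNIV. xd t $ \<mu> * mom g (x t) (xd t) (n t) \<mu>) = - m\<^sup>2 * n t"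
    using n_nonzero[OF t] by (simp add: sum_mult_mom_eq_gform mass_shell[OF t] power2_eq_square)
  finally show ?thesis
    using n_nonzero[OF t] by (simp add: charge_def)
qed

lemma noether_field_differentiable:
  assumes t: "t \<in> {a<..<b}"
  shows "noether_field \<mu> differentiable (at t)"
proof -
  obtain D where "(xd has_derivative D) (at t)"
    using xd_diff t unfolding differentiable_def by blast
  then have "(\<lambda>s. xd s $ \<mu>) differentiable (at t)"
    by (rule differentiableI[OF has_derivative_vec_nth])
  moreover have "(\<lambda>s. Y (x s) $ \<mu>) differentiable (at t)" "W differentiable (at t)"
    using has_real_derivative_Y_comp[OF t] has_real_derivative_W[OF t] real_differentiable_def by blast+
  ultimately show ?thesis
    unfolding noether_field_def[abs_def] using n_diff n_nonzero[OF t] t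
    by (intro differentiable_diff differentiable_mult differentiable_divide) auto
qed

lemma prolongation_noether_field_annihilates_Lag:
  assumes t: "t \<in> {a<..<b}"
  shows "(\<Sum>\<mu>\<in>UNIV. noether_field \<mu> t * L_x g m (x t) (xd t) (n t) \<mu>)
       + (\<Sum>\<mu>\<in>UNIV. deriv (noether_field \<mu>) t * L_v g m (x t) (xd t) (n t) \<mu>) = 0"
proof -
  have "((\<lambda>s. \<Sum>\<mu>\<in>UNIV. noether_field \<mu> s * L_v g m (x s) (xd s) (n s) \<mu>) has_real_derivative
      (\<Sum>\<mu>\<in>UNIV. deriv (noether_field \<mu>) t * L_v g m (x t) (xd t) (n t) \<mu>
        + L_x g m (x t) (xd t) (n t) \<mu> * noether_field \<mu> t)) (at t)"
    using EL_x t noether_field_differentiable[OF t]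
    by (intro DERIV_sum DERIV_mult) (auto simp: DERIV_deriv_iff_real_differentiable)
  moreover have "((\<lambda>s. \<Sum>\<mu>\<in>UNIV. noether_field \<mu> s * L_v g m (x s) (xd s) (n s) \<mu>) has_real_derivative 0) (at t)"
    by (rule has_field_derivative_transform_within_open[OF has_real_derivative_charge[OF t], where S="{a<..<b}"])
      (use t sum_noether_field_L_v in auto)
  ultimately show ?thesis
    by (auto dest: DERIV_unique simp: sum.distrib mult.commute add.commute)
qed

end

theorem mainTheorem3:
  fixes g :: "real^'n \<Rightarrow> real^'n^'n" and Y :: "real^'n \<Rightarrow> real^'n"
    and \<omega> :: "real^'n \<Rightarrow> real" and U :: "(real^'n) set"
    and m a b t0 :: real and x xd :: "real \<Rightarrow> real^'n" and n :: "real \<Rightarrow> real"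
  assumes U_open: "open U"
    and g_sym: "\<forall>y\<in>U. \<forall>\<mu> \<nu>. g y $ \<mu> $ \<nu> = g y $ \<nu> $ \<mu>"
    and g_nondeg: "\<forall>y\<in>U. det (g y) \<noteq> 0"
    and g_diff: "\<forall>y\<in>U. g differentiable (at y)"
    and Y_diff: "\<forall>y\<in>U. Y differentiable (at y)"
    and \<omega>_cont: "continuous_on U \<omega>"
    and conf_Killing: "\<forall>y\<in>U. \<forall>\<mu> \<nu>. lie_metric g Y y \<mu> \<nu> = 2 * \<omega> y * g y $ \<mu> $ \<nu>"
    and t0_in: "t0 \<in> {a<..<b}"
    and x_in: "\<forall>t\<in>{a<..<b}. x t \<in> U"
    and x_deriv: "\<forall>t\<in>{a<..<b}. (x has_vector_derivative xd t) (at t)"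
    and xd_diff: "\<forall>t\<in>{a<..<b}. xd differentiable (at t)"
    and n_pos: "\<forall>t\<in>{a<..<b}. n t > 0"
    and n_diff: "\<forall>t\<in>{a<..<b}. n differentiable (at t)"
    and EL_x: "\<forall>t\<in>{a<..<b}. \<forall>\<mu>.
                 ((\<lambda>s. L_v g m (x s) (xd s) (n s) \<mu>) has_real_derivative
                    L_x g m (x t) (xd t) (n t) \<mu>) (at t)"
    and EL_n: "\<forall>t\<in>{a<..<b}. L_n g m (x t) (xd t) (n t) = 0"
  shows "let W = (\<lambda>t. oint t0 t (\<lambda>s. n s * \<omega> (x s)));
             I = (\<lambda>t. (\<Sum>\<mu>\<in>UNIV. Y (x t) $ \<mu> * mom g (x t) (xd t) (n t) \<mu>) + m\<^sup>2 * W t);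
             X = (\<lambda>\<mu> t. Y (x t) $ \<mu> - xd t $ \<mu> / n t * W t)
         in (\<forall>t\<in>{a<..<b}. \<forall>s\<in>{a<..<b}. I t = I s)
          \<and> (\<forall>t\<in>{a<..<b}. \<forall>\<mu>. X \<mu> differentiable (at t))
          \<and> (\<forall>t\<in>{a<..<b}.
               (\<Sum>\<mu>\<in>UNIV. X \<mu> t * L_x g m (x t) (xd t) (n t) \<mu>)
             + (\<Sum>\<mu>\<in>UNIV. deriv (X \<mu>) t * L_v g m (x t) (xd t) (n t) \<mu>) = 0)
          \<and> (\<forall>t\<in>{a<..<b}. (\<Sum>\<mu>\<in>UNIV. X \<mu> t * L_v g m (x t) (xd t) (n t) \<mu>) = I t)"
proof -
  interpret conformal_Killing_solution g Y \<omega> U m a b t0 x xd n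
    using assms by (simp add: conformal_Killing_solution_def)
  show ?thesis
    using charge_constant noether_field_differentiable prolongation_noether_field_annihilates_Lag
      sum_noether_field_L_v
    unfolding Let_def charge_def noether_field_def W_def by blast
qed

end
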